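(* Let $a_1,\dots,a_N$ be pairwise distinct nonzero complex numbers. The eigenvalues of $\mathbf{S}_a$ are $a_1,\dots,a_N$. Define $N\times N$ matrices $\mathbf{D}_a=(d_{i,j})$ and $\mathbf{E}_a=(e_{i,j})$ by, for $i\ge j$, $$d_{i,j}=\frac{a_i}{a_N}\prod_{k=i+1}^{N}\Big(1-\frac{a_k}{a_j}\Big),\qquad e_{i,j}=\frac{a_N}{a_i}\prod_{\substack{k=j\\k\ne i}}^{N}\frac{1}{1-\frac{a_k}{a_i}},$$ and $d_{i,j}=e_{i,j}=0$ for $i<j$. Then for each $j$, the column $(d_{1,j},\dots,d_{N,j})^T$ is an eigenvector of $\mathbf{S}_a$ with eigenvalue $a_j$; moreover $\mathbf{D}_a^{-1}=\mathbf{E}_a$, so that $$\mathbf{S}_a=\mathbf{D}_a\,\mathrm{diag}(a_1,\dots,a_N)\,\mathbf{E}_a,\quad\text{and hence}\quad \mathbf{S}_a^k=\mathbf{D}_a\,\mathrm{diag}(a_1^k,\dots,a_N^k)\,\mathbf{E}_a\ \text{ for all integers }k\ge 1.$$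
   Context: For a sequence $a=(a_1,\dots,a_N)$ of complex numbers, $\mathbf{S}_a$ denotes the $N\times N$ matrix with $(\mathbf{S}_a)_{i,j}=a_i$ if $i\ge j$ and $0$ otherwise. $\mathrm{diag}(x_1,\dots,x_N)$ is the diagonal matrix with diagonal entries $x_1,\dots,x_N$. *)

theory Defs
  imports "Jordan_Normal_Form.Char_Poly"
begin

text \<open>Convention: the sequence a is indexed 1..N (a i for 1 \<le> i \<le> N), as in the paper.
  Matrices of Jordan_Normal_Form are 0-indexed, so entry (i,j) of a matrix (0-based)
  is the paper's entry (i+1,j+1).\<close>

definition S_mat :: "nat \<Rightarrow> (nat \<Rightarrow> complex) \<Rightarrow> complex mat" where
  "S_mat N a = mat N N (\<lambda>(i,j). if i \<ge> j then a (i+1) else 0)"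

definition d_entry :: "nat \<Rightarrow> (nat \<Rightarrow> complex) \<Rightarrow> nat \<Rightarrow> nat \<Rightarrow> complex" where
  "d_entry N a i j = (if i \<ge> j then a i / a N * (\<Prod>k\<in>{i+1..N}. 1 - a k / a j) else 0)"

definition e_entry :: "nat \<Rightarrow> (nat \<Rightarrow> complex) \<Rightarrow> nat \<Rightarrow> nat \<Rightarrow> complex" where
  "e_entry N a i j = (if i \<ge> j then a N / a i * (\<Prod>k\<in>{j..N} - {i}. 1 / (1 - a k / a i)) else 0)"

definition D_mat :: "nat \<Rightarrow> (nat \<Rightarrow> complex) \<Rightarrow> complex mat" where
  "D_mat N a = mat N N (\<lambda>(i,j). d_entry N a (i+1) (j+1))"

definition E_mat :: "nat \<Rightarrow> (nat \<Rightarrow> complex) \<Rightarrow> complex mat" where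
  "E_mat N a = mat N N (\<lambda>(i,j). e_entry N a (i+1) (j+1))"

end

theory Submission
  imports Defs
begin

text \<open>
  Write \<open>\<Lambda> = diag(a\<^sub>1, \<dots>, a\<^sub>N)\<close>. In the column \<open>j\<close> of \<open>S D\<close> the partial sums of
  \<open>d\<^sub>m\<^sub>,\<^sub>j\<close> telescope, because each new product factor \<open>1 - a\<^sub>k/a\<^sub>j\<close> is exactly compensated
  by the next entry; this gives \<open>S D = D \<Lambda>\<close>, and the same telescoping along the rows of \<open>E\<close>
  gives \<open>E S = \<Lambda> E\<close>. Hence \<open>E D\<close> commutes with \<open>\<Lambda>\<close>, which has distinct diagonal entries,
  so \<open>E D\<close> is diagonal; as \<open>E\<close> and \<open>D\<close> are lower triangular, its diagonal entries are
  \<open>e\<^sub>i\<^sub>,\<^sub>i d\<^sub>i\<^sub>,\<^sub>i = 1\<close>. Thus \<open>S = D \<Lambda> D\<^sup>-\<^sup>1\<close>, and everything else follows from this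
  similarity and from \<open>S\<close> being lower triangular with diagonal \<open>a\<^sub>1, \<dots>, a\<^sub>N\<close>.
\<close>

definition lower_triangular :: "'a::zero mat \<Rightarrow> bool" where
  "lower_triangular A \<longleftrightarrow> (\<forall>i<dim_row A. \<forall>j<dim_col A. i < j \<longrightarrow> A $$ (i,j) = 0)"

lemma mat_diag_pow_mat: "mat_diag n f ^\<^sub>m k = mat_diag n (\<lambda>i. f i ^ k)"
proof (induction k)
  case 0
  show ?case by (simp add: mat_diag_def)
next
  case (Suc k)
  then show ?case by (simp add: power_commutes)
qed

lemma eigenvalue_lower_triangular_iff:
  fixes A :: "'a::field mat"
  assumes A: "A \<in> carrier_mat n n" and lt: "lower_triangular A"
  shows "eigenvalue A c \<longleftrightarrow> (\<exists>i<n. c = A $$ (i,i))"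
proof -
  have At: "transpose_mat A \<in> carrier_mat n n" using A by simp
  have ut: "upper_triangular (transpose_mat A)"
    using A lt unfolding lower_triangular_def upper_triangular_def by auto
  have "eigenvalue A c \<longleftrightarrow> poly (char_poly (transpose_mat A)) c = 0"
    using A by (simp add: eigenvalue_root_char_poly)
  also have "\<dots> \<longleftrightarrow> (\<exists>i<n. c = A $$ (i,i))"
    using A by (simp add: char_poly_upper_triangular[OF At ut] poly_prod_list_zero_iff diag_mat_def) auto
  finally show ?thesis .
qed

lemma lower_triangular_mult_diag_entry:
  fixes A B :: "'a::semiring_0 mat"
  assumes A: "A \<in> carrier_mat n n" and B: "B \<in> carrier_mat n n"
    and "lower_triangular A" "lower_triangular B" and i: "i < n"
  shows "(A * B) $$ (i,i) = A $$ (i,i) * B $$ (i,i)"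
proof -
  have "(A * B) $$ (i,i) = (\<Sum>m\<in>{0..<n}. A $$ (i,m) * B $$ (m,i))"
    using A B i by (simp add: scalar_prod_def)
  also have "\<dots> = (\<Sum>m\<in>{0..<n}. if m = i then A $$ (i,i) * B $$ (i,i) else 0)"
  proof (rule sum.cong)
    fix m
    assume m: "m \<in> {0..<n}"
    consider "m < i" | "m = i" | "i < m"
      by linarith
    then show "A $$ (i,m) * B $$ (m,i) = (if m = i then A $$ (i,i) * B $$ (i,i) else 0)"
      using assms m unfolding lower_triangular_def by cases simp_all
  qed simp
  finally show ?thesis using i by simp
qed

lemma commutes_with_mat_diag_off_diag_zero:
  fixes X :: "'a::idom mat"
  assumes X: "X \<in> carrier_mat n n" and comm: "mat_diag n f * X = X * mat_diag n f"
    and inj: "inj_on f {..<n}" and ij: "i < n" "j < n" "i \<noteq> j"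
  shows "X $$ (i,j) = 0"
proof -
  have "f i * X $$ (i,j) = X $$ (i,j) * f j"
    using arg_cong[OF comm, of "\<lambda>M. M $$ (i,j)"] X ij
    by (simp add: mat_diag_mult_left[of _ n n] mat_diag_mult_right[of _ n])
  moreover have "f i \<noteq> f j" using inj ij by (auto dest: inj_onD)
  ultimately show ?thesis by (metis mult.commute mult_cancel_left)
qed

lemma eigenvector_col_if_mult_mat_diag:
  fixes A P :: "'a::comm_ring_1 mat"
  assumes A: "A \<in> carrier_mat n n" and P: "P \<in> carrier_mat n n"
    and AP: "A * P = P * mat_diag n f" and j: "j < n" and nz: "col P j \<noteq> 0\<^sub>v n"
  shows "eigenvector A (col P j) (f j)"
proof -
  have "A *\<^sub>v col P j = col (A * P) j"
    using A P j by (rule col_mult2[symmetric])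
  also have "\<dots> = col (P * mat_diag n f) j"
    by (simp only: AP)
  also have "\<dots> = f j \<cdot>\<^sub>v col P j"
    using P j by (subst mat_diag_mult_right[of _ n]) auto
  finally show ?thesis using A P nz unfolding eigenvector_def by auto
qed

lemma carrier_S_D_E_mat [simp]:
  "S_mat N a \<in> carrier_mat N N" "D_mat N a \<in> carrier_mat N N" "E_mat N a \<in> carrier_mat N N"
  by (simp_all add: S_mat_def D_mat_def E_mat_def)

lemma lower_triangular_S_D_E_mat:
  "lower_triangular (S_mat N a)" "lower_triangular (D_mat N a)" "lower_triangular (E_mat N a)"
  by (simp_all add: lower_triangular_def S_mat_def D_mat_def E_mat_def d_entry_def e_entry_def)

lemma index_S_mat_mult:
  assumes B: "B \<in> carrier_mat N nc" and i: "i < N" and j: "j < nc"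
  shows "(S_mat N a * B) $$ (i,j) = a (i+1) * (\<Sum>m\<le>i. B $$ (m,j))"
proof -
  have "(S_mat N a * B) $$ (i,j) = (\<Sum>m\<in>{0..<N}. if m \<in> {..i} then a (i+1) * B $$ (m,j) else 0)"
    using B i j by (auto simp: S_mat_def scalar_prod_def intro!: sum.cong)
  also have "\<dots> = (\<Sum>m\<in>{0..<N} \<inter> {..i}. a (i+1) * B $$ (m,j))"
    by (rule sum.inter_restrict[symmetric]) simp
  also have "{0..<N} \<inter> {..i} = {..i}"
    using i by auto
  finally show ?thesis by (simp add: sum_distrib_left)
qed

lemma index_mult_S_mat:
  assumes B: "B \<in> carrier_mat nr N" and i: "i < nr" and j: "j < N"
  shows "(B * S_mat N a) $$ (i,j) = (\<Sum>m\<in>{j..<N}. B $$ (i,m) * a (m+1))"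
proof -
  have "(B * S_mat N a) $$ (i,j) = (\<Sum>m\<in>{0..<N}. if m \<in> {j..} then B $$ (i,m) * a (m+1) else 0)"
    using B i j by (auto simp: S_mat_def scalar_prod_def intro!: sum.cong)
  also have "\<dots> = (\<Sum>m\<in>{0..<N} \<inter> {j..}. B $$ (i,m) * a (m+1))"
    by (rule sum.inter_restrict[symmetric]) simp
  also have "{0..<N} \<inter> {j..} = {j..<N}"
    by auto
  finally show ?thesis .
qed

lemma d_entry_column_sum:
  assumes nz: "\<forall>i\<in>{1..N}. a i \<noteq> 0" and j: "1 \<le> j" "j \<le> i" and i: "i \<le> N"
  shows "(\<Sum>m\<in>{1..i}. d_entry N a m j) = a j / a N * (\<Prod>k\<in>{i+1..N}. 1 - a k / a j)"
  using j(2) i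
proof (induction i rule: dec_induct)
  case base
  have "(\<Sum>m\<in>{1..j}. d_entry N a m j) = (\<Sum>m\<in>{1..j}. if m = j then d_entry N a j j else 0)"
    by (intro sum.cong) (auto simp: d_entry_def)
  then show ?case
    using j(1) by (simp add: d_entry_def)
next
  case (step n)
  have aj: "a j \<noteq> 0" and aN: "a N \<noteq> 0"
    using nz j(1) step.hyps step.prems by auto
  define Q where "Q = (\<Prod>k\<in>{n+2..N}. 1 - a k / a j)"
  have "(\<Sum>m\<in>{1..Suc n}. d_entry N a m j) = a j / a N * (\<Prod>k\<in>{n+1..N}. 1 - a k / a j) + a (n+1) / a N * Q"
    using step j by (simp add: d_entry_def Q_def)
  also have "(\<Prod>k\<in>{n+1..N}. 1 - a k / a j) = (1 - a (n+1) / a j) * Q"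
    using step.prems unfolding Q_def by (simp add: prod.atLeast_Suc_atMost)
  also have "a j / a N * ((1 - a (n+1) / a j) * Q) + a (n+1) / a N * Q = a j / a N * Q"
    using aj aN by (simp add: field_simps)
  finally show ?case
    by (simp add: Q_def)
qed

lemma e_entry_row_sum:
  assumes nz: "\<forall>i\<in>{1..N}. a i \<noteq> 0" and inj: "inj_on a {1..N}"
    and i: "i \<le> N" and j: "1 \<le> j" "j \<le> N"
  shows "(\<Sum>m\<in>{j..N}. e_entry N a i m * a m) = a i * e_entry N a i j"
  using j(2) j(1)
proof (induction j rule: inc_induct)
  case base
  show ?case
    using i by (cases "i = N") (auto simp: e_entry_def)
next
  case (step n)
  have "(\<Sum>m\<in>{n..N}. e_entry N a i m * a m) = e_entry N a i n * a n + a i * e_entry N a i (Suc n)"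
    using step by (simp add: sum.atLeast_Suc_atMost)
  also have "\<dots> = a i * e_entry N a i n"
  proof (cases "n < i")
    case True
    define Q where "Q = (\<Prod>k\<in>{Suc n..N} - {i}. 1 / (1 - a k / a i))"
    have ai: "a i \<noteq> 0" and aN: "a N \<noteq> 0"
      using nz True i step.prems by auto
    have "a n \<noteq> a i"
      using inj True i step.prems by (auto dest: inj_onD)
    then have c: "1 - a n / a i \<noteq> 0"
      using ai by (simp add: field_simps)
    have "{n..N} - {i} = insert n ({Suc n..N} - {i})"
      using True i by auto
    then have "e_entry N a i n = a N / a i * (1 / (1 - a n / a i) * Q)"
      using True by (simp add: e_entry_def Q_def)
    moreover have "e_entry N a i (Suc n) = a N / a i * Q"
      using True by (simp add: e_entry_def Q_def)
    ultimately show ?thesis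
      using ai aN c by (simp add: field_simps)
  qed (auto simp: e_entry_def)
  finally show ?case .
qed

lemma S_mat_mult_D_mat:
  assumes nz: "\<forall>i\<in>{1..N}. a i \<noteq> 0"
  shows "S_mat N a * D_mat N a = D_mat N a * mat_diag N (\<lambda>i. a (i+1))"
proof (rule eq_matI)
  fix i j
  assume "i < dim_row (D_mat N a * mat_diag N (\<lambda>i. a (i+1)))"
    and "j < dim_col (D_mat N a * mat_diag N (\<lambda>i. a (i+1)))"
  then have i: "i < N" and j: "j < N" by (simp_all add: D_mat_def mat_diag_def)
  have "(S_mat N a * D_mat N a) $$ (i,j) = a (i+1) * (\<Sum>m\<le>i. d_entry N a (m+1) (j+1))"
    using i j by (auto simp: index_S_mat_mult[of _ N N] D_mat_def intro!: sum.cong)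
  also have "(\<Sum>m\<le>i. d_entry N a (m+1) (j+1)) = (\<Sum>m\<in>{1..i+1}. d_entry N a m (j+1))"
    using sum.shift_bounds_cl_nat_ivl[of "\<lambda>m. d_entry N a m (j+1)" 0 1 i]
    by (simp only: atMost_atLeast0 add_0)
  also have "a (i+1) * \<dots> = d_entry N a (i+1) (j+1) * a (j+1)"
  proof (cases "j \<le> i")
    case True
    then show ?thesis
      using i by (subst d_entry_column_sum[OF nz]) (auto simp: d_entry_def)
  qed (auto simp: d_entry_def)
  also have "\<dots> = (D_mat N a * mat_diag N (\<lambda>i. a (i+1))) $$ (i,j)"
    using i j by (simp add: mat_diag_mult_right[of _ N] D_mat_def)
  finally show "(S_mat N a * D_mat N a) $$ (i,j) = (D_mat N a * mat_diag N (\<lambda>i. a (i+1))) $$ (i,j)" .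
qed (simp_all add: S_mat_def D_mat_def mat_diag_def)

lemma E_mat_mult_S_mat:
  assumes nz: "\<forall>i\<in>{1..N}. a i \<noteq> 0" and inj: "inj_on a {1..N}"
  shows "E_mat N a * S_mat N a = mat_diag N (\<lambda>i. a (i+1)) * E_mat N a"
proof (rule eq_matI)
  fix i j
  assume "i < dim_row (mat_diag N (\<lambda>i. a (i+1)) * E_mat N a)"
    and "j < dim_col (mat_diag N (\<lambda>i. a (i+1)) * E_mat N a)"
  then have i: "i < N" and j: "j < N" by (simp_all add: E_mat_def mat_diag_def)
  have "(E_mat N a * S_mat N a) $$ (i,j) = (\<Sum>m\<in>{j..<N}. e_entry N a (i+1) (m+1) * a (m+1))"
    using i j by (auto simp: index_mult_S_mat[of _ N N] E_mat_def intro!: sum.cong)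
  also have "\<dots> = (\<Sum>m\<in>{j+1..N}. e_entry N a (i+1) m * a m)"
    using sum.shift_bounds_nat_ivl[of "\<lambda>m. e_entry N a (i+1) m * a m" j 1 N]
    by (simp only: atLeastLessThanSuc_atLeastAtMost Suc_eq_plus1[symmetric])
  also have "\<dots> = a (i+1) * e_entry N a (i+1) (j+1)"
    using i j by (intro e_entry_row_sum[OF nz inj]) auto
  also have "\<dots> = (mat_diag N (\<lambda>i. a (i+1)) * E_mat N a) $$ (i,j)"
    using i j by (simp add: mat_diag_mult_left[of _ N N] E_mat_def)
  finally show "(E_mat N a * S_mat N a) $$ (i,j) = (mat_diag N (\<lambda>i. a (i+1)) * E_mat N a) $$ (i,j)" .
qed (simp_all add: E_mat_def S_mat_def mat_diag_def)

lemma e_entry_mult_d_entry_diag: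
  assumes nz: "\<forall>i\<in>{1..N}. a i \<noteq> 0" and inj: "inj_on a {1..N}" and i: "i \<in> {1..N}"
  shows "e_entry N a i i * d_entry N a i i = 1"
proof -
  have ai: "a i \<noteq> 0" and aN: "a N \<noteq> 0"
    using nz i by auto
  define P where "P = (\<Prod>k\<in>{i+1..N}. 1 - a k / a i)"
  have "1 - a k / a i \<noteq> 0" if k: "k \<in> {i+1..N}" for k
  proof -
    have "a k \<noteq> a i"
      using inj k i by (auto dest: inj_onD)
    then show ?thesis
      using ai by (simp add: field_simps)
  qed
  then have P: "P \<noteq> 0"
    unfolding P_def by auto
  have "{i..N} - {i} = {i+1..N}"
    by auto
  then have "e_entry N a i i = a N / a i / P"
    by (simp add: e_entry_def P_def prod_dividef)
  moreover have "d_entry N a i i = a i / a N * P"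
    by (simp add: d_entry_def P_def)
  ultimately show ?thesis
    using ai aN P by simp
qed

lemma E_mat_mult_D_mat:
  assumes nz: "\<forall>i\<in>{1..N}. a i \<noteq> 0" and inj: "inj_on a {1..N}"
  shows "E_mat N a * D_mat N a = 1\<^sub>m N"
proof -
  let ?L = "mat_diag N (\<lambda>i. a (i+1))"
  define X where "X = E_mat N a * D_mat N a"
  have X: "X \<in> carrier_mat N N"
    unfolding X_def by (rule mult_carrier_mat[of _ N N]) simp_all
  have "?L * X = (?L * E_mat N a) * D_mat N a"
    unfolding X_def by (rule assoc_mult_mat[symmetric, of _ N N _ N _ N]) simp_all
  also have "\<dots> = (E_mat N a * S_mat N a) * D_mat N a"
    by (simp only: E_mat_mult_S_mat[OF nz inj])
  also have "\<dots> = E_mat N a * (S_mat N a * D_mat N a)"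
    by (rule assoc_mult_mat[of _ N N _ N _ N]) simp_all
  also have "\<dots> = E_mat N a * (D_mat N a * ?L)"
    by (simp only: S_mat_mult_D_mat[OF nz])
  also have "\<dots> = X * ?L"
    unfolding X_def by (rule assoc_mult_mat[symmetric, of _ N N _ N _ N]) simp_all
  finally have comm: "?L * X = X * ?L" .
  have inj_L: "inj_on (\<lambda>i. a (i+1)) {..<N}"
    using comp_inj_on[of Suc "{..<N}" a] inj by (simp add: image_Suc_lessThan o_def)
  show ?thesis
    unfolding X_def[symmetric]
  proof (rule eq_matI)
    fix i j
    assume "i < dim_row (1\<^sub>m N :: complex mat)" and "j < dim_col (1\<^sub>m N :: complex mat)"
    then have i: "i < N" and j: "j < N" by simp_all
    show "X $$ (i,j) = 1\<^sub>m N $$ (i,j)"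
    proof (cases "i = j")
      case True
      have "X $$ (i,i) = E_mat N a $$ (i,i) * D_mat N a $$ (i,i)"
        unfolding X_def using i
        by (intro lower_triangular_mult_diag_entry[of _ N]) (simp_all add: lower_triangular_S_D_E_mat)
      also have "\<dots> = e_entry N a (i+1) (i+1) * d_entry N a (i+1) (i+1)"
        using i by (simp add: E_mat_def D_mat_def)
      also have "\<dots> = 1"
        using i by (intro e_entry_mult_d_entry_diag[OF nz inj]) simp
      finally show ?thesis
        using True i by simp
    next
      case False
      then show ?thesis
        using commutes_with_mat_diag_off_diag_zero[OF X comm inj_L i j] i j by simp
    qed
  qed (use X in simp_all)
qed

lemma D_mat_mult_E_mat:
  assumes nz: "\<forall>i\<in>{1..N}. a i \<noteq> 0" and inj: "inj_on a {1..N}"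
  shows "D_mat N a * E_mat N a = 1\<^sub>m N"
  by (rule mat_mult_left_right_inverse[OF _ _ E_mat_mult_D_mat[OF nz inj]]) simp_all

lemma S_mat_diagonalization:
  assumes nz: "\<forall>i\<in>{1..N}. a i \<noteq> 0" and inj: "inj_on a {1..N}"
  shows "S_mat N a = D_mat N a * mat_diag N (\<lambda>i. a (i+1)) * E_mat N a"
proof -
  have "S_mat N a = S_mat N a * (D_mat N a * E_mat N a)"
    by (simp add: D_mat_mult_E_mat[OF nz inj] right_mult_one_mat[OF carrier_S_D_E_mat(1)])
  also have "\<dots> = (S_mat N a * D_mat N a) * E_mat N a"
    by (rule assoc_mult_mat[symmetric, of _ N N _ N _ N]) simp_all
  also have "\<dots> = D_mat N a * mat_diag N (\<lambda>i. a (i+1)) * E_mat N a"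
    by (simp only: S_mat_mult_D_mat[OF nz])
  finally show ?thesis .
qed

lemma pow_S_mat:
  assumes nz: "\<forall>i\<in>{1..N}. a i \<noteq> 0" and inj: "inj_on a {1..N}"
  shows "S_mat N a ^\<^sub>m k = D_mat N a * mat_diag N (\<lambda>i. a (i+1) ^ k) * E_mat N a"
proof -
  have "similar_mat_wit (S_mat N a) (mat_diag N (\<lambda>i. a (i+1))) (D_mat N a) (E_mat N a)"
    by (rule similar_mat_witI[OF D_mat_mult_E_mat[OF nz inj] E_mat_mult_D_mat[OF nz inj]
          S_mat_diagonalization[OF nz inj]]) simp_all
  then show ?thesis
    by (simp only: similar_mat_wit_pow_id mat_diag_pow_mat)
qed

lemma eigenvalues_S_mat: "{c. eigenvalue (S_mat N a) c} = a ` {1..N}"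
proof -
  have "{c. eigenvalue (S_mat N a) c} = (\<lambda>i. a (Suc i)) ` {..<N}"
    unfolding eigenvalue_lower_triangular_iff[OF carrier_S_D_E_mat(1) lower_triangular_S_D_E_mat(1)]
    by (auto simp: S_mat_def)
  also have "\<dots> = a ` {1..N}"
    by (simp add: image_image[of a Suc, symmetric] image_Suc_lessThan)
  finally show ?thesis .
qed

lemma eigenvector_col_D_mat:
  assumes nz: "\<forall>i\<in>{1..N}. a i \<noteq> 0" and inj: "inj_on a {1..N}" and j: "j \<in> {1..N}"
  shows "eigenvector (S_mat N a) (col (D_mat N a) (j - 1)) (a j)"
proof -
  obtain i where i: "i < N" and ji: "j = i + 1"
    using j by (cases j) auto
  have "col (D_mat N a) i $ i = d_entry N a j j"
    using i ji by (simp add: D_mat_def)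
  also have "\<dots> \<noteq> 0"
    using e_entry_mult_d_entry_diag[OF nz inj j] by auto
  finally have "col (D_mat N a) i \<noteq> 0\<^sub>v N"
    using i by auto
  from eigenvector_col_if_mult_mat_diag[OF carrier_S_D_E_mat(1,2) S_mat_mult_D_mat[OF nz] i this]
  show ?thesis
    using ji by simp
qed

theorem proposition2p2:
  fixes N :: nat and a :: "nat \<Rightarrow> complex"
  assumes N: "N \<ge> 1"
    and nonzero: "\<forall>i\<in>{1..N}. a i \<noteq> 0"
    and distinct: "inj_on a {1..N}"
  shows "({c. eigenvalue (S_mat N a) c} = a ` {1..N})
      \<and> (\<forall>j\<in>{1..N}. eigenvector (S_mat N a) (col (D_mat N a) (j - 1)) (a j))
      \<and> (D_mat N a * E_mat N a = 1\<^sub>m N \<and> E_mat N a * D_mat N a = 1\<^sub>m N)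
      \<and> S_mat N a = D_mat N a * mat_diag N (\<lambda>i. a (i+1)) * E_mat N a
      \<and> (\<forall>k::nat. k \<ge> 1 \<longrightarrow>
           S_mat N a ^\<^sub>m k = D_mat N a * mat_diag N (\<lambda>i. a (i+1) ^ k) * E_mat N a)"
  using eigenvalues_S_mat eigenvector_col_D_mat[OF nonzero distinct]
    D_mat_mult_E_mat[OF nonzero distinct] E_mat_mult_D_mat[OF nonzero distinct]
    S_mat_diagonalization[OF nonzero distinct] pow_S_mat[OF nonzero distinct]
  by blast

end
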